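(* Let $a,b,c$ be three points on a circle of radius $1$ with center $o$ in the plane, such that $o$ lies in the (closed) triangle $\triangle abc$. Then the perimeter of $\triangle abc$ is at least $4$. *)

theory Defs
  imports "HOL-Analysis.Analysis"
begin

end

theory Submission
  imports Defs
begin

text \<open>
  Translate the centre to the origin, so that the vertices become unit vectors u, v, w with
  0 in their convex hull. Since \<open>|u - v|\<^sup>2 = 2 (1 - u \<bullet> v)\<close> and \<open>|u - v| \<le> 2\<close>, each side
  satisfies \<open>|u - v| \<ge> 1 - u \<bullet> v\<close>, so it suffices to show \<open>u \<bullet> v + v \<bullet> w + w \<bullet> u \<le> -1\<close>.
  Write \<open>0 = \<alpha> u + \<beta> v + \<gamma> w\<close> with nonnegative weights summing to 1. Pairing
  \<open>\<gamma> w = -(\<alpha> u + \<beta> v)\<close> with u, v and itself yields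
  \<open>\<gamma> (1 + u \<bullet> v + v \<bullet> w + w \<bullet> u) = 2 \<alpha> \<beta> ((u \<bullet> v)\<^sup>2 - 1) \<le> 0\<close>;
  adding the three cyclic versions of this identity gives the bound without any case
  distinction on vanishing weights.
\<close>

lemma unit_combination_zero_identity:
  fixes u v w :: "'a::real_inner"
  assumes "norm u = 1" "norm v = 1" "norm w = 1"
    and "\<alpha> *\<^sub>R u + \<beta> *\<^sub>R v + \<gamma> *\<^sub>R w = 0"
  shows "(\<alpha> + \<beta> + \<gamma>) * \<gamma> * (1 + u \<bullet> v + v \<bullet> w + w \<bullet> u) = 2 * \<alpha> * \<beta> * ((u \<bullet> v)\<^sup>2 - 1)"
proof -
  have unit: "u \<bullet> u = 1" "v \<bullet> v = 1" "w \<bullet> w = 1"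
    using assms(1-3) by (simp_all add: dot_square_norm)
  have \<gamma>w: "\<gamma> *\<^sub>R w = - (\<alpha> *\<^sub>R u + \<beta> *\<^sub>R v)"
    using assms(4) by (simp add: algebra_simps eq_neg_iff_add_eq_0)
  have vw: "\<gamma> * (v \<bullet> w) = - (\<alpha> * (u \<bullet> v) + \<beta>)"
    using arg_cong[OF \<gamma>w, of "\<lambda>x. v \<bullet> x"] unit
    by (simp add: inner_diff_left inner_diff_right inner_commute)
  have wu: "\<gamma> * (w \<bullet> u) = - (\<alpha> + \<beta> * (u \<bullet> v))"
    using arg_cong[OF \<gamma>w, of "\<lambda>x. x \<bullet> u"] unit
    by (simp add: inner_diff_left inner_diff_right inner_commute)
  have "\<gamma>\<^sup>2 = (\<gamma> *\<^sub>R w) \<bullet> (\<gamma> *\<^sub>R w)"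
    using unit by (simp add: power2_eq_square)
  also have "\<dots> = \<alpha>\<^sup>2 + \<beta>\<^sup>2 + 2 * \<alpha> * \<beta> * (u \<bullet> v)"
    unfolding \<gamma>w using unit
    by (simp add: inner_commute power2_eq_square algebra_simps)
  finally have \<gamma>sq: "\<gamma>\<^sup>2 = \<alpha>\<^sup>2 + \<beta>\<^sup>2 + 2 * \<alpha> * \<beta> * (u \<bullet> v)" .
  have "(\<alpha> + \<beta> + \<gamma>) * \<gamma> * (1 + u \<bullet> v + v \<bullet> w + w \<bullet> u)
      = (\<alpha> + \<beta> + \<gamma>) * (\<gamma> + \<gamma> * (u \<bullet> v) + \<gamma> * (v \<bullet> w) + \<gamma> * (w \<bullet> u))"
    by (simp add: distrib_left)
  also have "\<dots> = (\<gamma>\<^sup>2 - (\<alpha> + \<beta>)\<^sup>2) * (1 + u \<bullet> v)"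
    unfolding vw wu by (simp add: algebra_simps power2_eq_square)
  also have "\<dots> = 2 * \<alpha> * \<beta> * ((u \<bullet> v)\<^sup>2 - 1)"
    unfolding \<gamma>sq by (simp add: algebra_simps power2_eq_square)
  finally show ?thesis .
qed

lemma inner_sum_le_neg_one_if_zero_in_convex_hull:
  fixes u v w :: "'a::real_inner"
  assumes "norm u = 1" "norm v = 1" "norm w = 1"
    and "0 \<in> convex hull {u, v, w}"
  shows "u \<bullet> v + v \<bullet> w + w \<bullet> u \<le> -1"
proof -
  obtain \<alpha> \<beta> \<gamma> where nonneg: "\<alpha> \<ge> 0" "\<beta> \<ge> 0" "\<gamma> \<ge> 0" and "\<alpha> + \<beta> + \<gamma> = 1"
    and comb: "\<alpha> *\<^sub>R u + \<beta> *\<^sub>R v + \<gamma> *\<^sub>R w = 0"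
    using assms(4) unfolding convex_hull_3 by auto
  have "\<bar>x \<bullet> y\<bar> \<le> 1" if "norm x = 1" "norm y = 1" for x y :: 'a
    using Cauchy_Schwarz_ineq2[of x y] that by simp
  then have sq_le: "(u \<bullet> v)\<^sup>2 \<le> 1" "(v \<bullet> w)\<^sup>2 \<le> 1" "(w \<bullet> u)\<^sup>2 \<le> 1"
    using assms(1-3) by (simp_all add: abs_square_le_1)
  have "\<beta> *\<^sub>R v + \<gamma> *\<^sub>R w + \<alpha> *\<^sub>R u = 0" "\<gamma> *\<^sub>R w + \<alpha> *\<^sub>R u + \<beta> *\<^sub>R v = 0"
    using comb by (simp_all add: algebra_simps)
  note rotations = unit_combination_zero_identity[OF assms(1-3) comb]
    unit_combination_zero_identity[OF assms(2,3,1) this(1)]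
    unit_combination_zero_identity[OF assms(3,1,2) this(2)]
  have "1 + u \<bullet> v + v \<bullet> w + w \<bullet> u
      = (\<alpha> + \<beta> + \<gamma>) * ((\<alpha> + \<beta> + \<gamma>) * (1 + u \<bullet> v + v \<bullet> w + w \<bullet> u))"
    using \<open>\<alpha> + \<beta> + \<gamma> = 1\<close> by simp
  also have "\<dots> = (\<alpha> + \<beta> + \<gamma>) * \<gamma> * (1 + u \<bullet> v + v \<bullet> w + w \<bullet> u)
      + (\<beta> + \<gamma> + \<alpha>) * \<alpha> * (1 + v \<bullet> w + w \<bullet> u + u \<bullet> v)
      + (\<gamma> + \<alpha> + \<beta>) * \<beta> * (1 + w \<bullet> u + u \<bullet> v + v \<bullet> w)"
    by algebra
  also have "\<dots> = 2 * (\<alpha> * \<beta> * ((u \<bullet> v)\<^sup>2 - 1) + \<beta> * \<gamma> * ((v \<bullet> w)\<^sup>2 - 1)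
      + \<gamma> * \<alpha> * ((w \<bullet> u)\<^sup>2 - 1))"
    unfolding rotations by algebra
  also have "\<dots> \<le> 0"
    using nonneg sq_le by (intro mult_nonneg_nonpos add_nonpos_nonpos) auto
  finally show ?thesis by simp
qed

lemma one_minus_inner_le_norm_diff:
  fixes u v :: "'a::real_inner"
  assumes "norm u = 1" "norm v = 1"
  shows "1 - u \<bullet> v \<le> norm (u - v)"
proof -
  have "u \<bullet> u = 1" "v \<bullet> v = 1"
    using assms by (simp_all add: dot_square_norm)
  then have "2 * (1 - u \<bullet> v) = (u - v) \<bullet> (u - v)"
    by (simp add: inner_diff inner_commute)
  also have "\<dots> = norm (u - v) * norm (u - v)"
    by (simp add: power2_norm_eq_inner[symmetric] power2_eq_square)
  also have "\<dots> \<le> 2 * norm (u - v)"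
    using norm_triangle_ineq4[of u v] assms by (intro mult_right_mono) simp_all
  finally show ?thesis by simp
qed

theorem lemma1:
  fixes a b c ctr :: "real ^ 2"
  assumes "dist a ctr = 1" and "dist b ctr = 1" and "dist c ctr = 1"
    and "ctr \<in> convex hull {a, b, c}"
  shows "dist a b + dist b c + dist c a \<ge> 4"
proof -
  define u v w where "u = a - ctr" and "v = b - ctr" and "w = c - ctr"
  have unit: "norm u = 1" "norm v = 1" "norm w = 1"
    using assms(1-3) by (simp_all add: u_def v_def w_def dist_norm)
  have "0 \<in> (\<lambda>x. - ctr + x) ` (convex hull {a, b, c})"
    using assms(4) by (rule rev_image_eqI) simp
  then have "0 \<in> convex hull {u, v, w}"
    unfolding convex_hull_translation[symmetric] by (simp add: u_def v_def w_def)
  then have "u \<bullet> v + v \<bullet> w + w \<bullet> u \<le> -1"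
    by (rule inner_sum_le_neg_one_if_zero_in_convex_hull[OF unit])
  moreover have "dist a b = norm (u - v)" "dist b c = norm (v - w)" "dist c a = norm (w - u)"
    by (simp_all add: u_def v_def w_def dist_norm)
  moreover have "1 - u \<bullet> v \<le> norm (u - v)" "1 - v \<bullet> w \<le> norm (v - w)"
      "1 - w \<bullet> u \<le> norm (w - u)"
    using unit by (simp_all add: one_minus_inner_le_norm_diff)
  ultimately show ?thesis by linarith
qed

end
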